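(* Let $\mathbf{2}=\{\mathbf{0},\mathbf{1}\}$ and let $(\mathrm{Alt},\eta,\mu)$ be the monad on $\mathbf{Set}$ described in the context. Define $\beta:\mathrm{Alt}(\mathbf{2})\to\mathbf{2}$ by $\beta(S)=\mathbf{1}$ if $\{\mathbf{1}\}\in S$ and $\beta(S)=\mathbf{0}$ otherwise. Then $(\mathbf{2},\beta)$ is an Eilenberg–Moore algebra for $\mathrm{Alt}$, i.e. $\beta\circ\eta_{\mathbf{2}}=\mathrm{id}_{\mathbf{2}}$ and $\beta\circ\mu_{\mathbf{2}}=\beta\circ\mathrm{Alt}(\beta)$.
   Context: $\mathbf{Poset}$ is the category of partially ordered sets and monotone maps; $\mathcal{U}:\mathbf{Poset}\to\mathbf{Set}$ forgets the order; $\mathrm{Do}:\mathbf{Set}\to\mathbf{Poset}$ sends $X$ to the discrete poset $(X,=)$ and a function to itself; $\mathrm{Do}\dashv\mathcal{U}$ with unit $\eta^2_X=\mathrm{id}_X$ and counit $\epsilon^2_{(S,\le)}:(S,=)\to(S,\le)$ the identity of $S$. $\mathrm{Up}(X,\le)$ is the set of upward closed subsets of $X$ ordered by $\supseteq$, with $\mathrm{Up}(f)(P)=\{y\mid\exists x\in P,\ f(x)\le y\}$, unit $x\mapsto\{y\mid x\le y\}$, multiplication $S\mapsto\bigcup S$. $\mathrm{Dn}(X,\le)$ is the set of downward closed subsets ordered by $\subseteq$, with $\mathrm{Dn}(f)(P)=\{y\mid\exists x\in P,\ y\le f(x)\}$, unit $x\mapsto\{y\mid y\le x\}$, multiplication $S\mapsto\bigcup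 S$. Let $\lambda_X:\mathrm{Dn}\,\mathrm{Up}(X)\to\mathrm{Up}\,\mathrm{Dn}(X)$, $\lambda_X(S)=\{T\in\mathrm{Dn}(X)\mid\forall s\in S,\ s\cap T\neq\emptyset\}$, and let $(\mathrm{Up}\,\mathrm{Dn},\eta^1,\mu^1)$ be the composite monad with $\eta^1_X=\eta^{\mathrm{Up}}_{\mathrm{Dn}X}\circ\eta^{\mathrm{Dn}}_X$ and $\mu^1_X=\mathrm{Up}(\mu^{\mathrm{Dn}}_X)\circ\mu^{\mathrm{Up}}_{\mathrm{Dn}\mathrm{Dn}X}\circ\mathrm{Up}(\lambda_{\mathrm{Dn}X})$. $\mathrm{Alt}=\mathcal{U}\circ\mathrm{Up}\circ\mathrm{Dn}\circ\mathrm{Do}$ (so $\mathrm{Alt}(X)$ is the set of inclusion-upward-closed families of subsets of $X$), with unit $\eta_X=\mathcal{U}(\eta^1_{\mathrm{Do}X})\circ\eta^2_X$ and multiplication $\mu_X=\mathcal{U}(\mu^1_{\mathrm{Do}X})\circ\mathcal{U}\,\mathrm{Up}\,\mathrm{Dn}(\epsilon^2_{\mathrm{Up}\mathrm{Dn}\mathrm{Do}X})$; this is a monad on $\mathbf{Set}$. *)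

theory Defs
  imports Main
begin

text \<open>Posets are represented by a carrier set together with an order relation.\<close>

definition Up_set :: "'a set \<Rightarrow> ('a \<Rightarrow> 'a \<Rightarrow> bool) \<Rightarrow> 'a set set" where
  "Up_set A le = {P. P \<subseteq> A \<and> (\<forall>x\<in>P. \<forall>y\<in>A. le x y \<longrightarrow> y \<in> P)}"

definition Dn_set :: "'a set \<Rightarrow> ('a \<Rightarrow> 'a \<Rightarrow> bool) \<Rightarrow> 'a set set" where
  "Dn_set A le = {P. P \<subseteq> A \<and> (\<forall>x\<in>P. \<forall>y\<in>A. le y x \<longrightarrow> y \<in> P)}"

definition Up_le :: "'a set \<Rightarrow> 'a set \<Rightarrow> bool" where
  "Up_le P Q \<longleftrightarrow> Q \<subseteq> P"

definition Dn_le :: "'a set \<Rightarrow> 'a set \<Rightarrow> bool" where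
  "Dn_le P Q \<longleftrightarrow> P \<subseteq> Q"

definition Up_map :: "'b set \<Rightarrow> ('b \<Rightarrow> 'b \<Rightarrow> bool) \<Rightarrow> ('a \<Rightarrow> 'b) \<Rightarrow> 'a set \<Rightarrow> 'b set" where
  "Up_map B leB f P = {y \<in> B. \<exists>x\<in>P. leB (f x) y}"

definition Dn_map :: "'b set \<Rightarrow> ('b \<Rightarrow> 'b \<Rightarrow> bool) \<Rightarrow> ('a \<Rightarrow> 'b) \<Rightarrow> 'a set \<Rightarrow> 'b set" where
  "Dn_map B leB f P = {y \<in> B. \<exists>x\<in>P. leB y (f x)}"

definition Up_unit :: "'a set \<Rightarrow> ('a \<Rightarrow> 'a \<Rightarrow> bool) \<Rightarrow> 'a \<Rightarrow> 'a set" where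
  "Up_unit A le x = {y \<in> A. le x y}"

definition Dn_unit :: "'a set \<Rightarrow> ('a \<Rightarrow> 'a \<Rightarrow> bool) \<Rightarrow> 'a \<Rightarrow> 'a set" where
  "Dn_unit A le x = {y \<in> A. le y x}"

definition Up_mult :: "'a set set \<Rightarrow> 'a set" where
  "Up_mult S = \<Union>S"

definition Dn_mult :: "'a set set \<Rightarrow> 'a set" where
  "Dn_mult S = \<Union>S"

text \<open>Distributive law lambda_X : Dn Up X -> Up Dn X.\<close>
definition lam :: "'a set \<Rightarrow> ('a \<Rightarrow> 'a \<Rightarrow> bool) \<Rightarrow> 'a set set \<Rightarrow> 'a set set" where
  "lam A le S = {T \<in> Dn_set A le. \<forall>s\<in>S. s \<inter> T \<noteq> {}}"

definition UD_unit :: "'a set \<Rightarrow> ('a \<Rightarrow> 'a \<Rightarrow> bool) \<Rightarrow> 'a \<Rightarrow> 'a set set" where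
  "UD_unit A le x = Up_unit (Dn_set A le) Dn_le (Dn_unit A le x)"

definition UD_mult :: "'a set \<Rightarrow> ('a \<Rightarrow> 'a \<Rightarrow> bool) \<Rightarrow> 'a set set set set \<Rightarrow> 'a set set" where
  "UD_mult A le S =
     Up_map (Dn_set A le) Dn_le Dn_mult
       (Up_mult
         (Up_map (Up_set (Dn_set (Dn_set A le) Dn_le) Dn_le) Up_le
                 (lam (Dn_set A le) Dn_le) S))"

text \<open>The monad Alt = U o Up o Dn o Do on Set (a set is a carrier A with discrete order).\<close>
definition Alt_set :: "'a set \<Rightarrow> 'a set set set" where
  "Alt_set A = Up_set (Dn_set A (=)) Dn_le"

definition Alt_map :: "'b set \<Rightarrow> ('a \<Rightarrow> 'b) \<Rightarrow> 'a set set \<Rightarrow> 'b set set" where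
  "Alt_map B f P = Up_map (Dn_set B (=)) Dn_le (Dn_map B (=) f) P"

definition Alt_eta :: "'a set \<Rightarrow> 'a \<Rightarrow> 'a set set" where
  "Alt_eta A x = UD_unit A (=) x"

text \<open>mu_X = U(mu1_{Do X}) o U Up Dn (epsilon_{Up Dn Do X}), where epsilon is the identity
  map (Alt X, =) -> (Alt X, order of Up).\<close>
definition Alt_mu :: "'a set \<Rightarrow> 'a set set set set \<Rightarrow> 'a set set" where
  "Alt_mu A S = UD_mult A (=)
     (Up_map (Dn_set (Alt_set A) Up_le) Dn_le (Dn_map (Alt_set A) Up_le id) S)"

text \<open>The two-element set 2 = {0,1} is rendered as bool, with 1 = True, 0 = False.\<close>
definition beta :: "bool set set \<Rightarrow> bool" where
  "beta S = (if {True} \<in> S then True else False)"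

end

theory Submission
  imports Defs
begin

text \<open>Unwinding the composite monad, Alt is the monad of upward closed families of subsets:
  T \<in> \<eta> x iff x \<in> T, T \<in> Alt f P iff f ` p \<subseteq> T for some p \<in> P, and T \<in> \<mu> S iff some x \<in> S
  has T in each of its members (in the distributive law, the down-closed family Pow T is the
  witness). Since \<beta> F just tests {1} \<in> F, both algebra laws then reduce to {1} \<in> a \<longleftrightarrow> \<beta> a.\<close>

lemma Dn_set_eq_Pow: "Dn_set A (=) = Pow A"
  by (auto simp: Dn_set_def)

lemma mem_Alt_set_iff:
  "F \<in> Alt_set A \<longleftrightarrow> F \<subseteq> Pow A \<and> (\<forall>T\<in>F. \<forall>T'. T \<subseteq> T' \<and> T' \<subseteq> A \<longrightarrow> T' \<in> F)"
  by (auto simp: Alt_set_def Up_set_def Dn_set_eq_Pow Dn_le_def)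

lemma Alt_eta_eq: "x \<in> A \<Longrightarrow> Alt_eta A x = {T. T \<subseteq> A \<and> x \<in> T}"
  by (auto simp: Alt_eta_def UD_unit_def Up_unit_def Dn_unit_def Dn_set_eq_Pow Dn_le_def)

lemma Alt_map_eq: "Alt_map B f P = {T. T \<subseteq> B \<and> (\<exists>p\<in>P. f ` p \<inter> B \<subseteq> T)}"
  by (auto simp: Alt_map_def Up_map_def Dn_map_def Dn_set_eq_Pow Dn_le_def)

lemma lam_in_Up_set: "lam A le S \<in> Up_set (Dn_set A le) Dn_le"
  by (auto simp: lam_def Up_set_def Dn_le_def)

lemma mem_UD_mult_iff:
  "T \<in> UD_mult A le S \<longleftrightarrow>
     T \<in> Dn_set A le \<and> (\<exists>D\<in>S. \<exists>U\<in>lam (Dn_set A le) Dn_le D. \<Union>U \<subseteq> T)"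
proof -
  have "U \<in> Up_mult (Up_map (Up_set (Dn_set (Dn_set A le) Dn_le) Dn_le) Up_le
                      (lam (Dn_set A le) Dn_le) S)
        \<longleftrightarrow> (\<exists>D\<in>S. U \<in> lam (Dn_set A le) Dn_le D)" for U
    using lam_in_Up_set[of "Dn_set A le" Dn_le]
    by (auto simp: Up_mult_def Up_map_def Up_le_def)
  then show ?thesis
    unfolding UD_mult_def Up_map_def[of "Dn_set A le"] Dn_mult_def Dn_le_def by blast
qed

lemma mem_Alt_mu_iff:
  assumes S: "S \<in> Alt_set (Alt_set A)"
  shows "T \<in> Alt_mu A S \<longleftrightarrow> T \<subseteq> A \<and> (\<exists>x\<in>S. \<forall>a\<in>x. T \<in> a)"
proof -
  define down where "down = Dn_map (Alt_set A) Up_le id"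
  have down_eq: "down x = {y \<in> Alt_set A. \<exists>a\<in>x. a \<subseteq> y}" for x
    by (auto simp: down_def Dn_map_def Up_le_def)
  have x_Alt: "x \<subseteq> Alt_set A" if "x \<in> S" for x
    using S that by (auto simp: mem_Alt_set_iff)
  have "T \<in> Alt_mu A S \<longleftrightarrow> T \<subseteq> A \<and>
          (\<exists>D\<in>Dn_set (Alt_set A) Up_le. (\<exists>x\<in>S. down x \<subseteq> D) \<and>
             (\<exists>U\<in>lam (Pow A) Dn_le D. \<Union>U \<subseteq> T))"
    unfolding Alt_mu_def down_def[symmetric] mem_UD_mult_iff Dn_set_eq_Pow
    by (simp add: Up_map_def Dn_le_def Bex_def)
  also have "\<dots> \<longleftrightarrow> T \<subseteq> A \<and> (\<exists>x\<in>S. \<forall>a\<in>x. T \<in> a)"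
  proof (intro conj_cong refl iffI)
    assume "T \<subseteq> A"
      and "\<exists>D\<in>Dn_set (Alt_set A) Up_le. (\<exists>x\<in>S. down x \<subseteq> D) \<and>
             (\<exists>U\<in>lam (Pow A) Dn_le D. \<Union>U \<subseteq> T)"
    then obtain D x U where "x \<in> S" "down x \<subseteq> D" "U \<in> lam (Pow A) Dn_le D" "\<Union>U \<subseteq> T"
      by blast
    moreover have "T \<in> a" if "a \<in> x" for a
    proof -
      have a: "a \<in> Alt_set A" using x_Alt \<open>x \<in> S\<close> that by blast
      with \<open>a \<in> x\<close> have "a \<in> D" using \<open>down x \<subseteq> D\<close> by (auto simp: down_eq)
      with \<open>U \<in> lam (Pow A) Dn_le D\<close> obtain u where "u \<in> a" "u \<in> U"
        by (auto simp: lam_def)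
      moreover have "u \<subseteq> T" using \<open>u \<in> U\<close> \<open>\<Union>U \<subseteq> T\<close> by blast
      ultimately show "T \<in> a" using a \<open>T \<subseteq> A\<close> by (auto simp: mem_Alt_set_iff)
    qed
    ultimately show "\<exists>x\<in>S. \<forall>a\<in>x. T \<in> a" by blast
  next
    assume "T \<subseteq> A" and "\<exists>x\<in>S. \<forall>a\<in>x. T \<in> a"
    then obtain x where x: "x \<in> S" "\<forall>a\<in>x. T \<in> a" by blast
    have D: "down x \<in> Dn_set (Alt_set A) Up_le"
      by (auto simp: down_eq Dn_set_def Up_le_def)
    have U: "Pow T \<in> lam (Pow A) Dn_le (down x)"
      using \<open>T \<subseteq> A\<close> x(2) by (auto simp: lam_def down_eq Dn_set_def Dn_le_def)
    show "\<exists>D\<in>Dn_set (Alt_set A) Up_le. (\<exists>x\<in>S. down x \<subseteq> D) \<and>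
             (\<exists>U\<in>lam (Pow A) Dn_le D. \<Union>U \<subseteq> T)"
    proof (rule bexI[OF _ D], intro conjI)
      show "\<exists>x'\<in>S. down x' \<subseteq> down x" using x(1) by auto
      show "\<exists>U\<in>lam (Pow A) Dn_le (down x). \<Union>U \<subseteq> T" by (rule bexI[OF _ U]) simp
    qed
  qed
  finally show ?thesis .
qed

lemma beta_iff: "beta F \<longleftrightarrow> {True} \<in> F"
  by (simp add: beta_def)

theorem mainTheorem6:
  shows "(\<forall>b::bool. beta (Alt_eta UNIV b) = b) \<and>
         (\<forall>S \<in> Alt_set (Alt_set (UNIV :: bool set)).
            beta (Alt_mu UNIV S) = beta (Alt_map UNIV beta S))"
proof (intro conjI allI ballI)
  fix b :: bool
  show "beta (Alt_eta UNIV b) = b"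
    by (simp add: beta_iff Alt_eta_eq)
next
  fix S assume S: "S \<in> Alt_set (Alt_set (UNIV :: bool set))"
  have "beta (Alt_mu UNIV S) \<longleftrightarrow> (\<exists>x\<in>S. \<forall>a\<in>x. beta a)"
    by (simp add: beta_iff mem_Alt_mu_iff[OF S])
  also have "\<dots> \<longleftrightarrow> beta (Alt_map UNIV beta S)"
    by (auto simp: beta_iff Alt_map_eq)
  finally show "beta (Alt_mu UNIV S) = beta (Alt_map UNIV beta S)" .
qed

end
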